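(* Let $\mathcal{S}=(Q,E,\delta,Q_0,\Sigma,\ell)$ be a labeled finite-state automaton, $Q_S\subset Q$ a set of secret states, and $K$ a positive integer. Then $\mathcal{S}$ is strongly $K$-step opaque with respect to $Q_S$ if and only if for every state $(q,x)$ reachable in the concurrent composition $\mathrm{CC}(\mathcal{S}_{\varepsilon},\mathcal{S}_{\mathrm{dss\,obs}}^{\varepsilon})$ with $q\in Q_S$, one has $x\neq\emptyset$, and for every run $(q,x)\xrightarrow{s'}(q',x')$ in $\mathrm{CC}(\mathcal{S}_{\varepsilon},\mathcal{S}_{\mathrm{dss\,obs}}^{\varepsilon})$ with $|\ell(s')|\le K$, one has $x'\neq\emptyset$.
   Context: A labeled finite-state automaton (LFSA) is $\mathcal{S}=(Q,E,\delta,Q_0,\Sigma,\ell)$ with finite state set $Q$, finite event alphabet $E$, transition relation $\delta\subset Q\times E\times Q$, initial states $Q_0\subset Q$, finite output alphabet $\Sigma$, and labeling $\ell:E\to\Sigma\cup\{\epsilon\}$ ($\epsilon$ the empty word). $E_o=\{e:\ell(e)\in\Sigma\}$, $E_{uo}=\{e:\ell(e)=\epsilon\}$. Runs $q\xrightarrow{s}q'$ for event words $s$ are defined by chaining transitions (empty word: $q=q'$); $\ell$ extends morphically to words. For $x\subset Q$, $\mathrm{UR}(x)=\{q':\exists q\in x, s\in E_{uo}^*, q\xrightarrow{s}q'\}$. A state is reachable in an automaton if it is initial or is reached by a nonempty run from an initial state. A run is non-secret if none of its states (including first and last) lies in $Q_S$. Strong $K$-step opacity: $\mathcal{S}$ is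 strongly $K$-step opaque w.r.t. $Q_S$ if for every run $q_0\xrightarrow{s_1}q_1\xrightarrow{s_2}q_2$ with $q_0\in Q_0$, $q_1\in Q_S$, $|\ell(s_2)|\le K$, there is a non-secret run $q_0'\xrightarrow{s_1'}q_1'\xrightarrow{s_2'}q_2'$ with $q_0'\in Q_0$, $\ell(s_1)=\ell(s_1')$, $\ell(s_2)=\ell(s_2')$. Concurrent composition: for LFSAs $\mathcal{S}^i=(Q_i,E,\delta_i,Q_{0i},\Sigma,\ell)$, $i=1,2$, $\mathrm{CC}(\mathcal{S}^1,\mathcal{S}^2)$ has states $Q_1\times Q_2$, initial states $Q_{01}\times Q_{02}$, events $\{(e,e'):e,e'\in E_o,\ell(e)=\ell(e')\}\cup\{(e,\epsilon):e\in E_{uo}\}\cup\{(\epsilon,e):e\in E_{uo}\}$, transitions $((q_1,q_1'),(e,e'),(q_2,q_2'))$ iff $(q_1,e,q_2)\in\delta_1,(q_1',e',q_2')\in\delta_2$; $((q_1,q_1'),(e,\epsilon),(q_2,q_1'))$ iff $(q_1,e,q_2)\in\delta_1$; $((q_1,q_1'),(\epsilon,e),(q_1,q_2'))$ iff $(q_1',e,q_2')\in\delta_2$. The label of $(e,e')$ is $\ell(e)$; of $(e,\epsilon),(\epsilon,e)$ it is $\epsilon$; $\ell(s')$ of a word $s'$ of composed events is the concatenation of labels. $\mathcal{S}_{\varepsilon}$: LFSA with states $Q$, initial states $Q_0$, events $\ell(E_o)\cup\{\varepsilon\}$ ($\varepsilon$ a fresh symbol), transition $(q,\ell(e),q')$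 for each $(q,e,q')\in\delta$ with $e\in E_o$ and $(q,\varepsilon,q')$ for each $(q,e,q')\in\delta$ with $e\in E_{uo}$; labeling $\ell'$ = identity on $\ell(E_o)$, $\ell'(\varepsilon)=\epsilon$. $\mathcal{S}_{\mathrm{dss}}$: the accessible part (states reachable from initial states) of the LFSA obtained from $\mathcal{S}$ by deleting all states in $Q_S$ and all transitions incident to them (initial states $Q_0\setminus Q_S$). Its observer $\mathcal{S}_{\mathrm{dss\,obs}}$ is the deterministic automaton with states the subsets of the states of $\mathcal{S}_{\mathrm{dss}}$, alphabet the observable labels, initial state the unobservable reach (within $\mathcal{S}_{\mathrm{dss}}$) of its initial states, and $\delta(x,a)$ = set of states reachable in $\mathcal{S}_{\mathrm{dss}}$ from some $q\in x$ by a word $e_as$ with $e_a$ observable, $\ell(e_a)=a$, $s$ unobservable (so $\delta(\emptyset,a)=\emptyset$). $\mathcal{S}_{\mathrm{dss\,obs}}^{\varepsilon}$ is this observer viewed as an LFSA with events $\ell(E_o)\cup\{\varepsilon\}$ (no $\varepsilon$-transitions) and labeling $\ell'$; $\mathrm{CC}(\mathcal{S}_{\varepsilon},\mathcal{S}_{\mathrm{dss\,obs}}^{\varepsilon})$ is formed with events $\ell(E_o)\cup\{\varepsilon\}$ and labeling $\ell'$. *)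

theory Defs
  imports Main
begin

text \<open>Labeled finite-state automata. Events of type 'e, outputs of type 'o.
  The labeling maps an event to None (the empty word) or Some a (a in the output alphabet).\<close>

record ('q,'e,'o) lfsa =
  St   :: "'q set"
  Ev   :: "'e set"
  Tr   :: "('q \<times> 'e \<times> 'q) set"
  Init :: "'q set"
  Out  :: "'o set"
  Lab  :: "'e \<Rightarrow> 'o option"

definition wf_lfsa :: "('q,'e,'o) lfsa \<Rightarrow> bool" where
  "wf_lfsa S \<longleftrightarrow> finite (St S) \<and> finite (Ev S) \<and> finite (Out S) \<and>
     Tr S \<subseteq> St S \<times> Ev S \<times> St S \<and> Init S \<subseteq> St S \<and>
     (\<forall>e\<in>Ev S. Lab S e = None \<or> Lab S e \<in> Some ` Out S)"

definition obs_events :: "('q,'e,'o) lfsa \<Rightarrow> 'e set" where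
  "obs_events S = {e \<in> Ev S. Lab S e \<noteq> None}"

definition uo_events :: "('q,'e,'o) lfsa \<Rightarrow> 'e set" where
  "uo_events S = {e \<in> Ev S. Lab S e = None}"

inductive run :: "('q \<times> 'e \<times> 'q) set \<Rightarrow> 'q \<Rightarrow> 'e list \<Rightarrow> 'q \<Rightarrow> bool" for T where
  run_Nil: "run T q [] q"
| run_Cons: "(q, e, q') \<in> T \<Longrightarrow> run T q' s q'' \<Longrightarrow> run T q (e # s) q''"

inductive avoid_run :: "('q \<times> 'e \<times> 'q) set \<Rightarrow> 'q set \<Rightarrow> 'q \<Rightarrow> 'e list \<Rightarrow> 'q \<Rightarrow> bool"
  for T A where
  avoid_Nil: "q \<notin> A \<Longrightarrow> avoid_run T A q [] q"
| avoid_Cons: "q \<notin> A \<Longrightarrow> (q, e, q') \<in> T \<Longrightarrow> avoid_run T A q' s q'' \<Longrightarrow> avoid_run T A q (e # s) q''"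

definition labw :: "('e \<Rightarrow> 'o option) \<Rightarrow> 'e list \<Rightarrow> 'o list" where
  "labw l s = concat (map (\<lambda>e. case l e of None \<Rightarrow> [] | Some a \<Rightarrow> [a]) s)"

definition strongly_K_step_opaque :: "('q,'e,'o) lfsa \<Rightarrow> 'q set \<Rightarrow> nat \<Rightarrow> bool" where
  "strongly_K_step_opaque S QS K \<longleftrightarrow>
    (\<forall>q0 s1 q1 s2 q2. q0 \<in> Init S \<and> run (Tr S) q0 s1 q1 \<and> q1 \<in> QS \<and> run (Tr S) q1 s2 q2 \<and>
        length (labw (Lab S) s2) \<le> K \<longrightarrow>
      (\<exists>q0' s1' q1' s2' q2'. q0' \<in> Init S \<and> avoid_run (Tr S) QS q0' s1' q1' \<and>
          avoid_run (Tr S) QS q1' s2' q2' \<and>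
          labw (Lab S) s1 = labw (Lab S) s1' \<and> labw (Lab S) s2 = labw (Lab S) s2'))"

definition UR :: "('q \<times> 'e \<times> 'q) set \<Rightarrow> ('e \<Rightarrow> 'o option) \<Rightarrow> 'q set \<Rightarrow> 'q set" where
  "UR T l x = {q'. \<exists>q\<in>x. \<exists>s. (\<forall>e\<in>set s. l e = None) \<and> run T q s q'}"

definition reachable :: "('q,'e,'o) lfsa \<Rightarrow> 'q \<Rightarrow> bool" where
  "reachable S q \<longleftrightarrow> q \<in> Init S \<or> (\<exists>q0\<in>Init S. \<exists>s. s \<noteq> [] \<and> run (Tr S) q0 s q)"

text \<open>S_epsilon: events are observable labels (Some a) plus the fresh symbol epsilon (None);
  labeling is the identity (epsilon is mapped to the empty word None).\<close>
definition S_eps :: "('q,'e,'o) lfsa \<Rightarrow> ('q,'o option,'o) lfsa" where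
  "S_eps S = \<lparr> St = St S, Ev = Lab S ` obs_events S \<union> {None},
     Tr = {(q, Lab S e, q') | q e q'. (q, e, q') \<in> Tr S},
     Init = Init S, Out = Out S, Lab = id \<rparr>"

definition dss_states :: "('q,'e,'o) lfsa \<Rightarrow> 'q set \<Rightarrow> 'q set" where
  "dss_states S QS = {q. \<exists>q0 \<in> Init S - QS. \<exists>s.
     run {(p, e, p') \<in> Tr S. p \<notin> QS \<and> p' \<notin> QS} q0 s q}"

definition dss :: "('q,'e,'o) lfsa \<Rightarrow> 'q set \<Rightarrow> ('q,'e,'o) lfsa" where
  "dss S QS = \<lparr> St = dss_states S QS, Ev = Ev S,
     Tr = {(q, e, q') \<in> Tr S. q \<in> dss_states S QS \<and> q' \<in> dss_states S QS},
     Init = Init S - QS, Out = Out S, Lab = Lab S \<rparr>"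

definition obs_step :: "('q,'e,'o) lfsa \<Rightarrow> 'q set \<Rightarrow> 'o \<Rightarrow> 'q set" where
  "obs_step S x a = {q'. \<exists>q\<in>x. \<exists>e q1. (q, e, q1) \<in> Tr S \<and> Lab S e = Some a \<and>
       q' \<in> UR (Tr S) (Lab S) {q1}}"

definition obs_eps :: "('q,'e,'o) lfsa \<Rightarrow> ('q set,'o option,'o) lfsa" where
  "obs_eps S = \<lparr> St = Pow (St S), Ev = Lab S ` obs_events S \<union> {None},
     Tr = {(x, Some a, obs_step S x a) | x a. x \<subseteq> St S \<and> Some a \<in> Lab S ` obs_events S},
     Init = {UR (Tr S) (Lab S) (Init S)}, Out = Out S, Lab = id \<rparr>"

text \<open>Concurrent composition; composed events are pairs of 'e option, None standing for
  the empty word in the pair notation (e, epsilon), (epsilon, e). Both components share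
  the event set and labeling (taken from the first component).\<close>
definition cc_events :: "('q1,'e,'o) lfsa \<Rightarrow> ('e option \<times> 'e option) set" where
  "cc_events S1 = {(Some e, Some e') | e e'. e \<in> obs_events S1 \<and> e' \<in> obs_events S1 \<and> Lab S1 e = Lab S1 e'}
     \<union> {(Some e, None) | e. e \<in> uo_events S1} \<union> {(None, Some e) | e. e \<in> uo_events S1}"

definition CC :: "('q1,'e,'o) lfsa \<Rightarrow> ('q2,'e,'o) lfsa \<Rightarrow> ('q1 \<times> 'q2, 'e option \<times> 'e option, 'o) lfsa" where
  "CC S1 S2 = \<lparr> St = St S1 \<times> St S2, Ev = cc_events S1,
     Tr = {((q1, q1'), (Some e, Some e'), (q2, q2')) | q1 q1' e e' q2 q2'.
              (Some e, Some e') \<in> cc_events S1 \<and> (q1, e, q2) \<in> Tr S1 \<and> (q1', e', q2') \<in> Tr S2}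
        \<union> {((q1, q1'), (Some e, None), (q2, q1')) | q1 q1' e q2.
              e \<in> uo_events S1 \<and> (q1, e, q2) \<in> Tr S1}
        \<union> {((q1, q1'), (None, Some e), (q1, q2')) | q1 q1' e q2'.
              e \<in> uo_events S1 \<and> (q1', e, q2') \<in> Tr S2},
     Init = Init S1 \<times> Init S2, Out = Out S1,
     Lab = (\<lambda>p. case p of (Some e, Some e') \<Rightarrow> Lab S1 e | _ \<Rightarrow> None) \<rparr>"

definition CC_eps_dssobs :: "('q,'e,'o) lfsa \<Rightarrow> 'q set \<Rightarrow>
    ('q \<times> 'q set, 'o option option \<times> 'o option option, 'o) lfsa" where
  "CC_eps_dssobs S QS = CC (S_eps S) (obs_eps (dss S QS))"

end

theory Submission
  imports Defs
begin

text \<open>After an observation w, the observer of the non-secret part S_dss is in the state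
  consisting of all states reached by non-secret runs from an initial state that produce w (the
  non-secret estimate of w). Running it in parallel with S, every run of S with observation w
  ends in a composed state (q, estimate of w), and conversely. Strong K-step opacity says exactly
  that the estimate of w1 w2 is nonempty whenever some run reaches a secret state with observation
  w1 and then produces w2 with at most K observations, which is the stated condition on the
  composition.\<close>

lemma labw_Nil [simp]: "labw l [] = []"
  by (simp add: labw_def)

lemma labw_Cons [simp]: "labw l (e # s) = (case l e of None \<Rightarrow> [] | Some a \<Rightarrow> [a]) @ labw l s"
  by (simp add: labw_def)

lemma labw_append [simp]: "labw l (s @ t) = labw l s @ labw l t"
  by (simp add: labw_def)

lemma labw_eq_Nil_iff: "labw l s = [] \<longleftrightarrow> (\<forall>e\<in>set s. l e = None)"
  by (induction s) (auto split: option.split)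

lemma labw_eq_append_split:
  "labw l s = w @ v \<Longrightarrow> \<exists>s1 s2. s = s1 @ s2 \<and> labw l s1 = w \<and> labw l s2 = v"
proof (induction s arbitrary: w)
  case (Cons e s)
  show ?case
  proof (cases "l e")
    case None
    with Cons obtain s1 s2 where "s = s1 @ s2" "labw l s1 = w" "labw l s2 = v"
      by auto
    with None show ?thesis
      by (intro exI[of _ "e # s1"] exI[of _ s2]) simp
  next
    case (Some a)
    show ?thesis
    proof (cases w)
      case Nil
      with Cons.prems show ?thesis
        by (intro exI[of _ "[]"] exI[of _ "e # s"]) simp
    next
      case (Cons b w')
      with Cons.prems Some obtain s1 s2 where "a = b" "s = s1 @ s2" "labw l s1 = w'" "labw l s2 = v"
        using Cons.IH by fastforce
      with Some Cons show ?thesis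
        by (intro exI[of _ "e # s1"] exI[of _ s2]) simp
    qed
  qed
qed simp

lemma labw_eq_Cons_split:
  "labw l s = a # v \<Longrightarrow> \<exists>u e t. s = u @ e # t \<and> labw l u = [] \<and> l e = Some a \<and> labw l t = v"
proof (induction s)
  case (Cons e s)
  show ?case
  proof (cases "l e")
    case None
    with Cons obtain u e' t where "s = u @ e' # t" "labw l u = []" "l e' = Some a" "labw l t = v"
      by auto
    with None show ?thesis
      by (intro exI[of _ "e # u"] exI[of _ e'] exI[of _ t]) simp
  next
    case (Some b)
    with Cons.prems show ?thesis
      by (intro exI[of _ "[]"] exI[of _ e] exI[of _ s]) simp
  qed
qed simp

lemma run_Nil_iff [simp]: "run T q [] q' \<longleftrightarrow> q' = q"
  by (auto elim: run.cases intro: run.intros)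

lemma run_Cons_iff [simp]: "run T q (e # s) q'' \<longleftrightarrow> (\<exists>q'. (q, e, q') \<in> T \<and> run T q' s q'')"
  by (auto elim: run.cases intro: run.intros)

lemma reachable_iff_run: "reachable A p \<longleftrightarrow> (\<exists>p0\<in>Init A. \<exists>s. run (Tr A) p0 s p)"
  unfolding reachable_def by (metis run_Nil_iff)

lemma avoid_run_Nil_iff [simp]: "avoid_run T A q [] q' \<longleftrightarrow> q' = q \<and> q \<notin> A"
  by (auto elim: avoid_run.cases intro: avoid_run.intros)

lemma avoid_run_Cons_iff [simp]:
  "avoid_run T A q (e # s) q'' \<longleftrightarrow> q \<notin> A \<and> (\<exists>q'. (q, e, q') \<in> T \<and> avoid_run T A q' s q'')"
  by (auto elim: avoid_run.cases intro: avoid_run.intros)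

lemma avoid_run_first_notin: "avoid_run T A q s q' \<Longrightarrow> q \<notin> A"
  by (cases s) auto

lemma avoid_run_last_notin: "avoid_run T A q s q' \<Longrightarrow> q' \<notin> A"
  by (induction s arbitrary: q) auto

lemma avoid_run_iff_run:
  "avoid_run T A q s q' \<longleftrightarrow> q \<notin> A \<and> run {(p, e, p') \<in> T. p \<notin> A \<and> p' \<notin> A} q s q'"
  by (induction s arbitrary: q) auto

lemma avoid_run_append_iff:
  "avoid_run T A q (s @ t) q'' \<longleftrightarrow> (\<exists>q'. avoid_run T A q s q' \<and> avoid_run T A q' t q'')"
  by (induction s arbitrary: q) (auto dest: avoid_run_first_notin)

lemma Lab_dss [simp]: "Lab (dss S QS) = Lab S"
  by (simp add: dss_def)

lemma Init_dss [simp]: "Init (dss S QS) = Init S - QS"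
  by (simp add: dss_def)

lemma St_dss [simp]: "St (dss S QS) = dss_states S QS"
  by (simp add: dss_def)

lemma obs_events_dss [simp]: "obs_events (dss S QS) = obs_events S"
  by (simp add: obs_events_def dss_def)

lemma dss_states_eq_avoid_run: "dss_states S QS = {q. \<exists>q0\<in>Init S. \<exists>s. avoid_run (Tr S) QS q0 s q}"
  unfolding dss_states_def avoid_run_iff_run by blast

lemma dss_states_notin: "q \<in> dss_states S QS \<Longrightarrow> q \<notin> QS"
  unfolding dss_states_eq_avoid_run by (blast dest: avoid_run_last_notin)

lemma Init_diff_subset_dss_states: "Init S - QS \<subseteq> dss_states S QS"
  unfolding dss_states_eq_avoid_run by (auto intro: avoid_run.avoid_Nil)

lemma dss_states_step:
  assumes "q \<in> dss_states S QS" and "(q, e, q') \<in> Tr S" and "q' \<notin> QS"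
  shows "q' \<in> dss_states S QS"
proof -
  obtain q0 s where "q0 \<in> Init S" "avoid_run (Tr S) QS q0 s q"
    using assms(1) unfolding dss_states_eq_avoid_run by blast
  moreover have "avoid_run (Tr S) QS q [e] q'"
    using assms dss_states_notin[OF assms(1)] by auto
  ultimately show ?thesis
    unfolding dss_states_eq_avoid_run by (blast intro: avoid_run_append_iff[THEN iffD2])
qed

lemma run_dss_iff_avoid_run:
  "q \<in> dss_states S QS \<Longrightarrow> run (Tr (dss S QS)) q s q' \<longleftrightarrow> avoid_run (Tr S) QS q s q'"
proof (induction s arbitrary: q)
  case (Cons e s)
  have step_dss: "(q, e, q1) \<in> Tr (dss S QS) \<longleftrightarrow> (q, e, q1) \<in> Tr S \<and> q1 \<in> dss_states S QS" for q1
    using Cons.prems by (simp add: dss_def)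
  show ?case
  proof
    assume "run (Tr (dss S QS)) q (e # s) q'"
    then obtain q1 where q1: "(q, e, q1) \<in> Tr S" "q1 \<in> dss_states S QS" "run (Tr (dss S QS)) q1 s q'"
      unfolding run_Cons_iff step_dss by blast
    with Cons.IH[OF q1(2)] have "avoid_run (Tr S) QS q1 s q'"
      by simp
    with q1(1) dss_states_notin[OF Cons.prems] show "avoid_run (Tr S) QS q (e # s) q'"
      by auto
  next
    assume "avoid_run (Tr S) QS q (e # s) q'"
    then obtain q1 where q1: "(q, e, q1) \<in> Tr S" "avoid_run (Tr S) QS q1 s q'"
      by auto
    have "q1 \<in> dss_states S QS"
      using Cons.prems q1(1) avoid_run_first_notin[OF q1(2)] by (rule dss_states_step)
    with q1 Cons.IH[OF this] show "run (Tr (dss S QS)) q (e # s) q'"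
      unfolding run_Cons_iff step_dss by blast
  qed
qed (simp add: dss_states_notin)

definition nonsecret_estimate :: "('q,'e,'o) lfsa \<Rightarrow> 'q set \<Rightarrow> 'o list \<Rightarrow> 'q set" where
  "nonsecret_estimate S QS w =
     {q. \<exists>q0\<in>Init S. \<exists>s. avoid_run (Tr S) QS q0 s q \<and> labw (Lab S) s = w}"

lemma nonsecret_estimate_subset_dss_states: "nonsecret_estimate S QS w \<subseteq> dss_states S QS"
  unfolding nonsecret_estimate_def dss_states_eq_avoid_run by blast

lemma nonsecret_estimate_snoc:
  "nonsecret_estimate S QS (w @ [a]) =
     {q'. \<exists>q\<in>nonsecret_estimate S QS w. \<exists>e. Lab S e = Some a \<and>
        (\<exists>u. labw (Lab S) u = [] \<and> avoid_run (Tr S) QS q (e # u) q')}"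
  (is "?lhs = ?rhs")
proof
  show "?lhs \<subseteq> ?rhs"
  proof
    fix q'
    assume "q' \<in> ?lhs"
    then obtain q0 s where q0: "q0 \<in> Init S" "avoid_run (Tr S) QS q0 s q'" "labw (Lab S) s = w @ [a]"
      unfolding nonsecret_estimate_def by auto
    obtain s1 s2 where s: "s = s1 @ s2" "labw (Lab S) s1 = w" "labw (Lab S) s2 = [a]"
      using labw_eq_append_split[OF q0(3)] by blast
    obtain u1 e u2 where u: "s2 = u1 @ e # u2" "labw (Lab S) u1 = []" "Lab S e = Some a"
        "labw (Lab S) u2 = []"
      using labw_eq_Cons_split[OF s(3)] by blast
    have "avoid_run (Tr S) QS q0 ((s1 @ u1) @ e # u2) q'"
      using q0(2) s(1) u(1) by simp
    then obtain q where "avoid_run (Tr S) QS q0 (s1 @ u1) q" "avoid_run (Tr S) QS q (e # u2) q'"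
      unfolding avoid_run_append_iff by blast
    moreover from this(1) have "q \<in> nonsecret_estimate S QS w"
      unfolding nonsecret_estimate_def using q0(1) s(2) u(2) by force
    ultimately show "q' \<in> ?rhs"
      using u(3,4) by (auto simp del: avoid_run_Cons_iff)
  qed
next
  show "?rhs \<subseteq> ?lhs"
  proof
    fix q'
    assume "q' \<in> ?rhs"
    then obtain q q0 s e u where "q0 \<in> Init S" "avoid_run (Tr S) QS q0 s q" "labw (Lab S) s = w"
        "Lab S e = Some a" "labw (Lab S) u = []" "avoid_run (Tr S) QS q (e # u) q'"
      unfolding nonsecret_estimate_def by (auto simp del: avoid_run_Cons_iff)
    then show "q' \<in> ?lhs"
      unfolding nonsecret_estimate_def
      by (intro CollectI bexI[of _ q0] exI[of _ "s @ e # u"]) (auto simp: avoid_run_append_iff)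
  qed
qed

lemma UR_dss_Init_eq_nonsecret_estimate_Nil:
  "UR (Tr (dss S QS)) (Lab S) (Init S - QS) = nonsecret_estimate S QS []"
proof -
  have run_iff: "run (Tr (dss S QS)) q s q' \<longleftrightarrow> avoid_run (Tr S) QS q s q'"
    if "q \<in> Init S - QS" for q s q'
    using Init_diff_subset_dss_states that by (rule subsetD[THEN run_dss_iff_avoid_run])
  have "UR (Tr (dss S QS)) (Lab S) (Init S - QS) =
      {q'. \<exists>q\<in>Init S - QS. \<exists>s. labw (Lab S) s = [] \<and> avoid_run (Tr S) QS q s q'}"
    unfolding UR_def labw_eq_Nil_iff by (auto simp: run_iff)
  also have "\<dots> = nonsecret_estimate S QS []"
    unfolding nonsecret_estimate_def by (auto dest: avoid_run_first_notin)
  finally show ?thesis .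
qed

lemma obs_step_dss_nonsecret_estimate:
  "obs_step (dss S QS) (nonsecret_estimate S QS w) a = nonsecret_estimate S QS (w @ [a])"
proof -
  have step_UR_iff: "(\<exists>q1. (q, e, q1) \<in> Tr (dss S QS) \<and> q' \<in> UR (Tr (dss S QS)) (Lab S) {q1}) \<longleftrightarrow>
      (\<exists>u. labw (Lab S) u = [] \<and> avoid_run (Tr S) QS q (e # u) q')"
    if "q \<in> nonsecret_estimate S QS w" for q e q'
  proof -
    have "q \<in> dss_states S QS"
      using nonsecret_estimate_subset_dss_states that by (rule subsetD)
    have "(\<exists>q1. (q, e, q1) \<in> Tr (dss S QS) \<and> q' \<in> UR (Tr (dss S QS)) (Lab S) {q1}) \<longleftrightarrow>
        (\<exists>u. (\<forall>e\<in>set u. Lab S e = None) \<and> run (Tr (dss S QS)) q (e # u) q')"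
      by (auto simp: UR_def)
    also have "\<dots> \<longleftrightarrow> (\<exists>u. (\<forall>e\<in>set u. Lab S e = None) \<and> avoid_run (Tr S) QS q (e # u) q')"
      by (simp only: run_dss_iff_avoid_run[OF \<open>q \<in> dss_states S QS\<close>])
    finally show ?thesis
      by (simp only: labw_eq_Nil_iff)
  qed
  have "obs_step (dss S QS) (nonsecret_estimate S QS w) a =
      {q'. \<exists>q\<in>nonsecret_estimate S QS w. \<exists>e. Lab S e = Some a \<and>
        (\<exists>q1. (q, e, q1) \<in> Tr (dss S QS) \<and> q' \<in> UR (Tr (dss S QS)) (Lab S) {q1})}"
    unfolding obs_step_def by auto
  also have "\<dots> = nonsecret_estimate S QS (w @ [a])"
    unfolding nonsecret_estimate_snoc by (simp add: step_UR_iff cong: bex_cong)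
  finally show ?thesis .
qed

lemma nonsecret_estimate_append_nonempty_iff:
  "nonsecret_estimate S QS (w @ v) \<noteq> {} \<longleftrightarrow>
    (\<exists>q0 s1 q1 s2 q2. q0 \<in> Init S \<and> avoid_run (Tr S) QS q0 s1 q1 \<and> avoid_run (Tr S) QS q1 s2 q2 \<and>
       w = labw (Lab S) s1 \<and> v = labw (Lab S) s2)"
proof
  assume "nonsecret_estimate S QS (w @ v) \<noteq> {}"
  then obtain q0 s q2 where q0: "q0 \<in> Init S" "avoid_run (Tr S) QS q0 s q2" "labw (Lab S) s = w @ v"
    unfolding nonsecret_estimate_def by auto
  obtain s1 s2 where s: "s = s1 @ s2" "labw (Lab S) s1 = w" "labw (Lab S) s2 = v"
    using labw_eq_append_split[OF q0(3)] by blast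
  from q0(2) obtain q1 where "avoid_run (Tr S) QS q0 s1 q1" "avoid_run (Tr S) QS q1 s2 q2"
    unfolding s(1) avoid_run_append_iff by blast
  with q0(1) s(2,3) show "\<exists>q0 s1 q1 s2 q2. q0 \<in> Init S \<and> avoid_run (Tr S) QS q0 s1 q1 \<and>
      avoid_run (Tr S) QS q1 s2 q2 \<and> w = labw (Lab S) s1 \<and> v = labw (Lab S) s2"
    by metis
next
  assume "\<exists>q0 s1 q1 s2 q2. q0 \<in> Init S \<and> avoid_run (Tr S) QS q0 s1 q1 \<and>
      avoid_run (Tr S) QS q1 s2 q2 \<and> w = labw (Lab S) s1 \<and> v = labw (Lab S) s2"
  then obtain q0 s1 q1 s2 q2 where run: "q0 \<in> Init S" "avoid_run (Tr S) QS q0 s1 q1"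
      "avoid_run (Tr S) QS q1 s2 q2" "w = labw (Lab S) s1" "v = labw (Lab S) s2"
    by blast
  then have "avoid_run (Tr S) QS q0 (s1 @ s2) q2"
    unfolding avoid_run_append_iff by blast
  with run show "nonsecret_estimate S QS (w @ v) \<noteq> {}"
    unfolding nonsecret_estimate_def by force
qed

definition delayed_estimates_nonempty :: "('q,'e,'o) lfsa \<Rightarrow> 'q set \<Rightarrow> nat \<Rightarrow> bool" where
  "delayed_estimates_nonempty S QS K \<longleftrightarrow>
    (\<forall>q0 s1 q1 s2 q2. q0 \<in> Init S \<and> run (Tr S) q0 s1 q1 \<and> q1 \<in> QS \<and> run (Tr S) q1 s2 q2 \<and>
        length (labw (Lab S) s2) \<le> K \<longrightarrow>
      nonsecret_estimate S QS (labw (Lab S) s1 @ labw (Lab S) s2) \<noteq> {})"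

lemma strongly_K_step_opaque_iff_delayed_estimates_nonempty:
  "strongly_K_step_opaque S QS K \<longleftrightarrow> delayed_estimates_nonempty S QS K"
  unfolding strongly_K_step_opaque_def delayed_estimates_nonempty_def
    nonsecret_estimate_append_nonempty_iff by (rule refl)

lemma Tr_CC_iff:
  "((p1, p2), ev, (p1', p2')) \<in> Tr (CC S1 S2) \<longleftrightarrow>
     (\<exists>e e'. ev = (Some e, Some e') \<and> (Some e, Some e') \<in> cc_events S1 \<and>
        (p1, e, p1') \<in> Tr S1 \<and> (p2, e', p2') \<in> Tr S2)
   \<or> (\<exists>e. ev = (Some e, None) \<and> e \<in> uo_events S1 \<and> (p1, e, p1') \<in> Tr S1 \<and> p2' = p2)
   \<or> (\<exists>e. ev = (None, Some e) \<and> e \<in> uo_events S1 \<and> (p2, e, p2') \<in> Tr S2 \<and> p1' = p1)"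
  by (auto simp: CC_def)

lemma Tr_S_eps_iff: "(q, a, q') \<in> Tr (S_eps S) \<longleftrightarrow> (\<exists>e. (q, e, q') \<in> Tr S \<and> Lab S e = a)"
  by (auto simp: S_eps_def)

lemma Lab_S_eps [simp]: "Lab (S_eps S) = id"
  by (simp add: S_eps_def)

lemma uo_events_S_eps: "uo_events (S_eps S) = {None}"
  by (auto simp: uo_events_def S_eps_def)

lemma cc_events_S_eps:
  "(Some b, Some b') \<in> cc_events (S_eps S) \<longleftrightarrow> b' = b \<and> (\<exists>e\<in>obs_events S. Lab S e = b)"
  by (auto simp: cc_events_def obs_events_def S_eps_def)

lemma Tr_obs_eps_dss_iff:
  "(x, b, x') \<in> Tr (obs_eps (dss S QS)) \<longleftrightarrow>
     (\<exists>a. b = Some a \<and> x \<subseteq> dss_states S QS \<and> (\<exists>e\<in>obs_events S. Lab S e = Some a) \<and>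
        x' = obs_step (dss S QS) x a)"
proof -
  have "Some a \<in> Lab S ` obs_events S \<longleftrightarrow> (\<exists>e\<in>obs_events S. Lab S e = Some a)" for a
    by force
  then show ?thesis
    by (auto simp: obs_eps_def)
qed

text \<open>The observer has no epsilon-transitions, so the composition has no moves (epsilon, e).
  The label a is carried by some observable event, which need not be e itself unless S is
  well-formed.\<close>

lemma Tr_CC_eps_dssobs_iff:
  "((q, x), ev, (q', x')) \<in> Tr (CC_eps_dssobs S QS) \<longleftrightarrow>
     (\<exists>a e. ev = (Some (Some a), Some (Some a)) \<and> (q, e, q') \<in> Tr S \<and> Lab S e = Some a \<and>
        (\<exists>e\<in>obs_events S. Lab S e = Some a) \<and> x \<subseteq> dss_states S QS \<and>
        x' = obs_step (dss S QS) x a)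
   \<or> (\<exists>e. ev = (Some None, None) \<and> (q, e, q') \<in> Tr S \<and> Lab S e = None \<and> x' = x)"
  unfolding CC_eps_dssobs_def Tr_CC_iff cc_events_S_eps uo_events_S_eps Tr_S_eps_iff
    Tr_obs_eps_dss_iff
  by auto

lemma Lab_CC_eps_dssobs:
  "Lab (CC_eps_dssobs S QS) (Some (Some a), Some (Some a)) = Some a"
  "Lab (CC_eps_dssobs S QS) (Some None, None) = None"
  by (simp_all add: CC_eps_dssobs_def CC_def)

lemma Init_CC_eps_dssobs:
  "Init (CC_eps_dssobs S QS) = Init S \<times> {nonsecret_estimate S QS []}"
  by (simp add: CC_eps_dssobs_def CC_def S_eps_def obs_eps_def UR_dss_Init_eq_nonsecret_estimate_Nil)

lemma run_CC_eps_dssobs_imp_run: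
  "run (Tr (CC_eps_dssobs S QS)) (q, nonsecret_estimate S QS w) s' (q', x') \<Longrightarrow>
   \<exists>s. run (Tr S) q s q' \<and> labw (Lab S) s = labw (Lab (CC_eps_dssobs S QS)) s' \<and>
     x' = nonsecret_estimate S QS (w @ labw (Lab S) s)"
proof (induction s' arbitrary: q w)
  case Nil
  then show ?case
    by (intro exI[of _ "[]"]) simp
next
  case (Cons ev s')
  obtain q1 x1 where tr: "((q, nonsecret_estimate S QS w), ev, (q1, x1)) \<in> Tr (CC_eps_dssobs S QS)"
    and r: "run (Tr (CC_eps_dssobs S QS)) (q1, x1) s' (q', x')"
    using Cons.prems by (metis run_Cons_iff surj_pair)
  from tr consider
      (obs) a e where "ev = (Some (Some a), Some (Some a))" "(q, e, q1) \<in> Tr S" "Lab S e = Some a"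
        "x1 = nonsecret_estimate S QS (w @ [a])"
    | (unobs) e where "ev = (Some None, None)" "(q, e, q1) \<in> Tr S" "Lab S e = None"
        "x1 = nonsecret_estimate S QS w"
    unfolding Tr_CC_eps_dssobs_iff obs_step_dss_nonsecret_estimate by metis
  then show ?case
  proof cases
    case obs
    with Cons.IH r obtain s where "run (Tr S) q1 s q'"
        "labw (Lab S) s = labw (Lab (CC_eps_dssobs S QS)) s'"
        "x' = nonsecret_estimate S QS ((w @ [a]) @ labw (Lab S) s)"
      by blast
    with obs show ?thesis
      by (intro exI[of _ "e # s"]) (auto simp: Lab_CC_eps_dssobs)
  next
    case unobs
    with Cons.IH r obtain s where "run (Tr S) q1 s q'"
        "labw (Lab S) s = labw (Lab (CC_eps_dssobs S QS)) s'"
        "x' = nonsecret_estimate S QS (w @ labw (Lab S) s)"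
      by blast
    with unobs show ?thesis
      by (intro exI[of _ "e # s"]) (auto simp: Lab_CC_eps_dssobs)
  qed
qed

lemma run_imp_run_CC_eps_dssobs:
  assumes "wf_lfsa S" and "run (Tr S) q s q'"
  shows "\<exists>s'. run (Tr (CC_eps_dssobs S QS)) (q, nonsecret_estimate S QS w) s'
      (q', nonsecret_estimate S QS (w @ labw (Lab S) s)) \<and>
    labw (Lab (CC_eps_dssobs S QS)) s' = labw (Lab S) s"
  using assms(2)
proof (induction s arbitrary: q w)
  case Nil
  then show ?case
    by (intro exI[of _ "[]"]) simp
next
  case (Cons e s)
  then obtain q1 where tr: "(q, e, q1) \<in> Tr S" and r: "run (Tr S) q1 s q'"
    by auto
  show ?case
  proof (cases "Lab S e")
    case None
    obtain s' where "run (Tr (CC_eps_dssobs S QS)) (q1, nonsecret_estimate S QS w) s'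
        (q', nonsecret_estimate S QS (w @ labw (Lab S) s))"
        "labw (Lab (CC_eps_dssobs S QS)) s' = labw (Lab S) s"
      using Cons.IH[OF r] by blast
    moreover have "((q, nonsecret_estimate S QS w), (Some None, None), (q1, nonsecret_estimate S QS w))
        \<in> Tr (CC_eps_dssobs S QS)"
      using tr None unfolding Tr_CC_eps_dssobs_iff by blast
    ultimately show ?thesis
      using None by (intro exI[of _ "(Some None, None) # s'"]) (auto simp: Lab_CC_eps_dssobs)
  next
    case (Some a)
    obtain s' where "run (Tr (CC_eps_dssobs S QS)) (q1, nonsecret_estimate S QS (w @ [a])) s'
        (q', nonsecret_estimate S QS ((w @ [a]) @ labw (Lab S) s))"
        "labw (Lab (CC_eps_dssobs S QS)) s' = labw (Lab S) s"
      using Cons.IH[OF r] by blast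
    moreover have "e \<in> obs_events S"
      using assms(1) tr Some unfolding wf_lfsa_def obs_events_def by blast
    then have "((q, nonsecret_estimate S QS w), (Some (Some a), Some (Some a)),
        (q1, nonsecret_estimate S QS (w @ [a]))) \<in> Tr (CC_eps_dssobs S QS)"
      using tr Some nonsecret_estimate_subset_dss_states[of S QS w]
      unfolding Tr_CC_eps_dssobs_iff obs_step_dss_nonsecret_estimate by blast
    ultimately show ?thesis
      using Some by (intro exI[of _ "(Some (Some a), Some (Some a)) # s'"])
        (auto simp: Lab_CC_eps_dssobs)
  qed
qed

lemma reachable_CC_eps_dssobs_iff:
  assumes "wf_lfsa S"
  shows "reachable (CC_eps_dssobs S QS) (q, x) \<longleftrightarrow>
    (\<exists>q0\<in>Init S. \<exists>s. run (Tr S) q0 s q \<and> x = nonsecret_estimate S QS (labw (Lab S) s))"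
proof
  assume "reachable (CC_eps_dssobs S QS) (q, x)"
  then obtain q0 s' where "q0 \<in> Init S"
      "run (Tr (CC_eps_dssobs S QS)) (q0, nonsecret_estimate S QS []) s' (q, x)"
    unfolding reachable_iff_run Init_CC_eps_dssobs by blast
  with run_CC_eps_dssobs_imp_run show "\<exists>q0\<in>Init S. \<exists>s. run (Tr S) q0 s q \<and>
      x = nonsecret_estimate S QS (labw (Lab S) s)"
    by fastforce
next
  assume "\<exists>q0\<in>Init S. \<exists>s. run (Tr S) q0 s q \<and> x = nonsecret_estimate S QS (labw (Lab S) s)"
  then obtain q0 s where "q0 \<in> Init S" "run (Tr S) q0 s q"
      "x = nonsecret_estimate S QS ([] @ labw (Lab S) s)"
    by auto
  with run_imp_run_CC_eps_dssobs[OF assms] show "reachable (CC_eps_dssobs S QS) (q, x)"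
    unfolding reachable_iff_run Init_CC_eps_dssobs by blast
qed

lemma CC_eps_dssobs_condition_iff_delayed_estimates_nonempty:
  assumes "wf_lfsa S"
  shows "(\<forall>q x. reachable (CC_eps_dssobs S QS) (q, x) \<and> q \<in> QS \<longrightarrow>
       (\<forall>s' q' x'. run (Tr (CC_eps_dssobs S QS)) (q, x) s' (q', x') \<and>
          length (labw (Lab (CC_eps_dssobs S QS)) s') \<le> K \<longrightarrow> x' \<noteq> {}))
    \<longleftrightarrow> delayed_estimates_nonempty S QS K"
  (is "?cc \<longleftrightarrow> _")
proof
  assume cc: ?cc
  show "delayed_estimates_nonempty S QS K"
    unfolding delayed_estimates_nonempty_def
  proof (intro allI impI, elim conjE)
    fix q0 s1 q1 s2 q2
    assume "q0 \<in> Init S" "run (Tr S) q0 s1 q1" "q1 \<in> QS" "run (Tr S) q1 s2 q2"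
      and len: "length (labw (Lab S) s2) \<le> K"
    then have reach: "reachable (CC_eps_dssobs S QS) (q1, nonsecret_estimate S QS (labw (Lab S) s1))"
      using reachable_CC_eps_dssobs_iff[OF assms] by blast
    obtain s' where "run (Tr (CC_eps_dssobs S QS)) (q1, nonsecret_estimate S QS (labw (Lab S) s1)) s'
        (q2, nonsecret_estimate S QS (labw (Lab S) s1 @ labw (Lab S) s2))"
        "labw (Lab (CC_eps_dssobs S QS)) s' = labw (Lab S) s2"
      using run_imp_run_CC_eps_dssobs[OF assms \<open>run (Tr S) q1 s2 q2\<close>] by blast
    with cc[rule_format, OF conjI[OF reach \<open>q1 \<in> QS\<close>]] len
    show "nonsecret_estimate S QS (labw (Lab S) s1 @ labw (Lab S) s2) \<noteq> {}"
      by metis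
  qed
next
  assume delayed: "delayed_estimates_nonempty S QS K"
  show ?cc
  proof (intro allI impI, elim conjE)
    fix q x s' q' x'
    assume "reachable (CC_eps_dssobs S QS) (q, x)" "q \<in> QS"
      and run': "run (Tr (CC_eps_dssobs S QS)) (q, x) s' (q', x')"
      and len: "length (labw (Lab (CC_eps_dssobs S QS)) s') \<le> K"
    then obtain q0 s1 where "q0 \<in> Init S" "run (Tr S) q0 s1 q"
        and x: "x = nonsecret_estimate S QS (labw (Lab S) s1)"
      using reachable_CC_eps_dssobs_iff[OF assms] by blast
    moreover obtain s2 where "run (Tr S) q s2 q'"
        "labw (Lab S) s2 = labw (Lab (CC_eps_dssobs S QS)) s'"
        "x' = nonsecret_estimate S QS (labw (Lab S) s1 @ labw (Lab S) s2)"
      using run_CC_eps_dssobs_imp_run[OF run'[unfolded x]] by blast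
    ultimately show "x' \<noteq> {}"
      using delayed \<open>q \<in> QS\<close> len unfolding delayed_estimates_nonempty_def by metis
  qed
qed

theorem theorem11:
  fixes S :: "('q,'e,'o) lfsa" and QS :: "'q set" and K :: nat
  assumes "wf_lfsa S" and "QS \<subseteq> St S" and "0 < K"
  shows "strongly_K_step_opaque S QS K \<longleftrightarrow>
    (\<forall>q x. reachable (CC_eps_dssobs S QS) (q, x) \<and> q \<in> QS \<longrightarrow>
       x \<noteq> {} \<and>
       (\<forall>s' q' x'. run (Tr (CC_eps_dssobs S QS)) (q, x) s' (q', x') \<and>
          length (labw (Lab (CC_eps_dssobs S QS)) s') \<le> K \<longrightarrow> x' \<noteq> {}))"
proof -
  have "x \<noteq> {}" if "\<forall>s' q' x'. run (Tr (CC_eps_dssobs S QS)) (q, x) s' (q', x') \<and>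
          length (labw (Lab (CC_eps_dssobs S QS)) s') \<le> K \<longrightarrow> x' \<noteq> {}" for q x
    using that[rule_format, of "[]" q x] by simp
  then show ?thesis
    using CC_eps_dssobs_condition_iff_delayed_estimates_nonempty[OF assms(1)]
      strongly_K_step_opaque_iff_delayed_estimates_nonempty
    by blast
qed

end
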